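(* For $1\le k\le n-1$ let $F(n,k)$ be the set of involutions $\omega$ of $[n]$ such that the word $\omega(1)\cdots\omega(n)$ contains $1\,2\,\cdots\,k$ as a subsequence (i.e. $1,\dots,k$ appear in increasing order) and the letter $k+1$ occurs before the letter $k$. Let $f(n,k)$ be the number of standard Young tableaux $T$ with $n$ cells (and more than one column) such that the entry of $T$ in row $1$, column $2$ is $k$. Then for $2\le k\le n$, $f(n,k)=|F(n,k-1)|$.
   Context: $[n]=\{1,\dots,n\}$; an involution is a permutation equal to its own inverse. A standard Young tableau with $n$ cells is a Ferrers diagram of a partition of $n$ filled bijectively with $1,\dots,n$, entries increasing along rows and down columns. *)

theory Defs
  imports "HOL-Combinatorics.Permutations"
begin

definition involution_on :: "nat \<Rightarrow> (nat \<Rightarrow> nat) \<Rightarrow> bool" where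
  "involution_on n w \<longleftrightarrow> w permutes {1..n} \<and> w \<circ> w = id"

text \<open>In the word w(1)...w(n), the letter j occurs at position inv w j.
  F(n,k): letters 1,...,k appear in increasing order, and letter k+1 occurs before letter k.\<close>
definition F_set :: "nat \<Rightarrow> nat \<Rightarrow> (nat \<Rightarrow> nat) set" where
  "F_set n k = {w. involution_on n w
      \<and> (\<forall>a b. 1 \<le> a \<and> a < b \<and> b \<le> k \<longrightarrow> inv w a < inv w b)
      \<and> inv w (k + 1) < inv w k}"

text \<open>Partitions as weakly decreasing lists of positive parts; cells 0-indexed (row, column).\<close>
definition is_partition :: "nat list \<Rightarrow> bool" where
  "is_partition lam \<longleftrightarrow> sorted_wrt (\<ge>) lam \<and> (\<forall>x\<in>set lam. 0 < x)"

definition cells :: "nat list \<Rightarrow> (nat \<times> nat) set" where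
  "cells lam = {(i, j). i < length lam \<and> j < lam ! i}"

definition syt :: "nat list \<Rightarrow> (nat \<times> nat \<Rightarrow> nat) \<Rightarrow> bool" where
  "syt lam T \<longleftrightarrow> is_partition lam
     \<and> bij_betw T (cells lam) {1..sum_list lam}
     \<and> (\<forall>c. c \<notin> cells lam \<longrightarrow> T c = 0)
     \<and> (\<forall>i j. (i, Suc j) \<in> cells lam \<longrightarrow> T (i, j) < T (i, Suc j))
     \<and> (\<forall>i j. (Suc i, j) \<in> cells lam \<longrightarrow> T (i, j) < T (Suc i, j))"

definition f_count :: "nat \<Rightarrow> nat \<Rightarrow> nat" where
  "f_count n k = card {T. \<exists>lam. syt lam T \<and> sum_list lam = n
       \<and> lam \<noteq> [] \<and> lam ! 0 > 1 \<and> T (0, 1) = k}"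

end

theory Submission
  imports Defs
begin

text \<open>
  Write C(p, r) for the number of involutions of p + r ordered points that are increasing on the
  first p of them. Following the largest point (fixed, paired with another of the last r points,
  or paired with the largest of the first p points) yields a recurrence showing that C(p, r) is
  the sum over j \<le> p of the numbers of involutions of r points with j marked fixed points. As
  F(n, m) consists of the involutions increasing on [m] but not on [m + 1], we get
  |F(n, k - 1)| = C(k - 1, n - k + 1) - C(k, n - k).

  Deleting the entries n, n - 1, ..., k + 1 of a tableau one at a time shows that f(n, k) counts
  the upward walks of length n - k in Young's lattice starting from the first column of height
  k - 1 together with the cell (0, 1). This shape and the column of height k are the two shapes
  covering the column of height k - 1, so f(n, k) = u(n - k + 1, col (k - 1)) - u(n - k, col k)
  for the up-walk counts u. Young's lattice is differential (DU - UD = I), which expresses u(N, S)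
  as a sum over j of marked involution numbers times the numbers of downward walks of length j
  from S; from a column of height p the latter is 1 for j \<le> p and 0 otherwise, whence
  u(N, col p) = C(p, N).
\<close>

section \<open>Young diagrams\<close>

definition down_closed :: "(nat \<times> nat) set \<Rightarrow> bool" where
  "down_closed S \<longleftrightarrow> (\<forall>i j i' j'. (i, j) \<in> S \<longrightarrow> i' \<le> i \<longrightarrow> j' \<le> j \<longrightarrow> (i', j') \<in> S)"

definition young_diagram :: "(nat \<times> nat) set \<Rightarrow> bool" where
  "young_diagram S \<longleftrightarrow> finite S \<and> down_closed S"

definition addable :: "(nat \<times> nat) set \<Rightarrow> (nat \<times> nat) set" where
  "addable S = {c. c \<notin> S \<and> down_closed (insert c S)}"

definition removable :: "(nat \<times> nat) set \<Rightarrow> (nat \<times> nat) set" where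
  "removable S = {c \<in> S. down_closed (S - {c})}"

definition row_len :: "(nat \<times> nat) set \<Rightarrow> nat \<Rightarrow> nat" where
  "row_len S i = card {j. (i, j) \<in> S}"

lemma down_closedD: "down_closed S \<Longrightarrow> (i, j) \<in> S \<Longrightarrow> i' \<le> i \<Longrightarrow> j' \<le> j \<Longrightarrow> (i', j') \<in> S"
  unfolding down_closed_def by blast

lemma down_closedI:
  "(\<And>i j i' j'. (i, j) \<in> S \<Longrightarrow> i' \<le> i \<Longrightarrow> j' \<le> j \<Longrightarrow> (i', j') \<in> S) \<Longrightarrow> down_closed S"
  unfolding down_closed_def by blast

lemma down_closed_Int: "down_closed A \<Longrightarrow> down_closed B \<Longrightarrow> down_closed (A \<inter> B)"
  unfolding down_closed_def by blast

lemma down_closed_Un: "down_closed A \<Longrightarrow> down_closed B \<Longrightarrow> down_closed (A \<union> B)"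
  unfolding down_closed_def by blast

lemma down_closed_insert_iff:
  assumes "down_closed S"
  shows "down_closed (insert (i, j) S) \<longleftrightarrow>
    (0 < i \<longrightarrow> (i - 1, j) \<in> S) \<and> (0 < j \<longrightarrow> (i, j - 1) \<in> S)"
proof
  assume dc: "down_closed (insert (i, j) S)"
  show "(0 < i \<longrightarrow> (i - 1, j) \<in> S) \<and> (0 < j \<longrightarrow> (i, j - 1) \<in> S)"
    using down_closedD[OF dc, of i j "i - 1" j] down_closedD[OF dc, of i j i "j - 1"] by auto
next
  assume pred: "(0 < i \<longrightarrow> (i - 1, j) \<in> S) \<and> (0 < j \<longrightarrow> (i, j - 1) \<in> S)"
  show "down_closed (insert (i, j) S)"
  proof (rule down_closedI)
    fix a b a' b'
    assume ab: "(a, b) \<in> insert (i, j) S" and le: "a' \<le> a" "b' \<le> b"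
    consider "(a, b) \<in> S" | "(a', b') = (i, j)" | "a = i" "b = j" "a' < i" | "a = i" "b = j" "b' < j"
      using ab le by fastforce
    then show "(a', b') \<in> insert (i, j) S"
    proof cases
      case 3
      then show ?thesis using pred le down_closedD[OF assms, of "i - 1" j a' b'] by auto
    next
      case 4
      then show ?thesis using pred le down_closedD[OF assms, of i "j - 1" a' b'] by auto
    qed (use down_closedD[OF assms] le in auto)
  qed
qed

lemma down_closed_remove_iff:
  assumes "down_closed S" "(i, j) \<in> S"
  shows "down_closed (S - {(i, j)}) \<longleftrightarrow> (Suc i, j) \<notin> S \<and> (i, Suc j) \<notin> S"
proof
  assume "down_closed (S - {(i, j)})"
  then show "(Suc i, j) \<notin> S \<and> (i, Suc j) \<notin> S"
    using down_closedD[of "S - {(i, j)}" _ _ i j] by fastforce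
next
  assume corner: "(Suc i, j) \<notin> S \<and> (i, Suc j) \<notin> S"
  show "down_closed (S - {(i, j)})"
  proof (rule down_closedI)
    fix a b a' b'
    assume ab: "(a, b) \<in> S - {(i, j)}" and le: "a' \<le> a" "b' \<le> b"
    have "(a', b') \<noteq> (i, j)"
    proof
      assume "(a', b') = (i, j)"
      then have "Suc i \<le> a \<and> j \<le> b \<or> i \<le> a \<and> Suc j \<le> b" using ab le by auto
      then show False using corner down_closedD[OF assms(1)] ab by blast
    qed
    then show "(a', b') \<in> S - {(i, j)}" using ab le down_closedD[OF assms(1)] by blast
  qed
qed

lemma removable_corner:
  "young_diagram U \<Longrightarrow> (i, j) \<in> removable U \<Longrightarrow> (Suc i, j) \<notin> U \<and> (i, Suc j) \<notin> U"
  using down_closed_remove_iff[of U i j] unfolding removable_def young_diagram_def by auto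

lemma down_closed_nat_eq_lessThan:
  fixes A :: "nat set"
  assumes "finite A" "\<And>j j'. j \<in> A \<Longrightarrow> j' \<le> j \<Longrightarrow> j' \<in> A"
  shows "A = {..<card A}"
proof -
  have "A \<subseteq> {..<card A}"
  proof
    fix j assume "j \<in> A"
    then have "card {..j} \<le> card A" using assms by (intro card_mono) auto
    then show "j \<in> {..<card A}" by simp
  qed
  then show ?thesis using card_subset_eq by (metis card_lessThan finite_lessThan)
qed

lemma young_diagram_finite_row:
  assumes "young_diagram S"
  shows "finite {j. (i, j) \<in> S}"
proof -
  have "{j. (i, j) \<in> S} \<subseteq> snd ` S" by force
  then show ?thesis using assms finite_subset unfolding young_diagram_def by blast
qed

lemma mem_iff_less_row_len:
  assumes "young_diagram S"
  shows "(i, j) \<in> S \<longleftrightarrow> j < row_len S i"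
proof -
  have "{j. (i, j) \<in> S} = {..<row_len S i}"
    unfolding row_len_def using assms young_diagram_finite_row[OF assms]
    by (intro down_closed_nat_eq_lessThan) (auto simp: young_diagram_def dest: down_closedD)
  then show ?thesis by (metis lessThan_iff mem_Collect_eq)
qed

lemma row_len_antimono:
  assumes "young_diagram S" "i \<le> i'"
  shows "row_len S i' \<le> row_len S i"
proof -
  have "{j. (i', j) \<in> S} \<subseteq> {j. (i, j) \<in> S}"
    using assms by (auto simp: young_diagram_def intro: down_closedD)
  then show ?thesis unfolding row_len_def by (rule card_mono[OF young_diagram_finite_row[OF assms(1)]])
qed

lemma addable_iff:
  assumes "young_diagram S"
  shows "(i, j) \<in> addable S \<longleftrightarrow> j = row_len S i \<and> (0 < i \<longrightarrow> row_len S i < row_len S (i - 1))"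
  using assms down_closed_insert_iff[of S i j] mem_iff_less_row_len[OF assms]
  unfolding addable_def young_diagram_def by auto

lemma removable_iff:
  assumes "young_diagram S"
  shows "(i, j) \<in> removable S \<longleftrightarrow> Suc j = row_len S i \<and> row_len S (Suc i) < row_len S i"
  using assms down_closed_remove_iff[of S i j] mem_iff_less_row_len[OF assms]
  unfolding removable_def young_diagram_def by auto

text \<open>Addable cells sit at the ends of row 0 and of the rows just below a strict descent of the
  row lengths, removable cells at the ends of the rows just above one; hence there is exactly
  one more addable than removable cell.\<close>
lemma card_addable:
  assumes "young_diagram S"
  shows "card (addable S) = Suc (card (removable S))"
proof -
  let ?D = "{i. row_len S (Suc i) < row_len S i}"
  have "?D \<subseteq> fst ` S"
    using mem_iff_less_row_len[OF assms] by (force simp: image_iff)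
  then have "finite ?D" using assms finite_subset unfolding young_diagram_def by blast
  have add: "addable S = (\<lambda>i. (i, row_len S i)) ` insert 0 (Suc ` ?D)"
  proof (rule set_eqI)
    fix c :: "nat \<times> nat"
    obtain i j where c: "c = (i, j)" by fastforce
    show "c \<in> addable S \<longleftrightarrow> c \<in> (\<lambda>i. (i, row_len S i)) ` insert 0 (Suc ` ?D)"
      unfolding c addable_iff[OF assms] by (cases i) auto
  qed
  have rem: "removable S = (\<lambda>i. (i, row_len S i - 1)) ` ?D"
  proof (rule set_eqI)
    fix c :: "nat \<times> nat"
    obtain i j where c: "c = (i, j)" by fastforce
    show "c \<in> removable S \<longleftrightarrow> c \<in> (\<lambda>i. (i, row_len S i - 1)) ` ?D"
      unfolding c removable_iff[OF assms] by auto
  qed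
  have "card (addable S) = card (insert 0 (Suc ` ?D))"
    unfolding add by (rule card_image[OF inj_on_convol_ident])
  also have "\<dots> = Suc (card ?D)"
    using \<open>finite ?D\<close> by (simp add: card_image)
  also have "card ?D = card (removable S)"
    unfolding rem by (rule card_image[OF inj_on_convol_ident, symmetric])
  finally show ?thesis .
qed

lemma finite_removable: "young_diagram S \<Longrightarrow> finite (removable S)"
  unfolding removable_def young_diagram_def by auto

lemma finite_addable: "young_diagram S \<Longrightarrow> finite (addable S)"
  using card_addable card.infinite by fastforce

lemma removable_subset: "removable S \<subseteq> S"
  unfolding removable_def by auto

lemma addable_not_mem: "a \<in> addable S \<Longrightarrow> a \<notin> S"
  unfolding addable_def by auto

lemma young_diagram_insert: "young_diagram S \<Longrightarrow> a \<in> addable S \<Longrightarrow> young_diagram (insert a S)"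
  unfolding young_diagram_def addable_def by auto

lemma young_diagram_remove: "young_diagram S \<Longrightarrow> r \<in> removable S \<Longrightarrow> young_diagram (S - {r})"
  unfolding young_diagram_def removable_def by auto

lemma addable_removable_insert: "young_diagram S \<Longrightarrow> a \<in> addable S \<Longrightarrow> a \<in> removable (insert a S)"
  unfolding removable_def addable_def young_diagram_def by (auto simp: insert_Diff_if)

lemma removable_addable_remove:
  "young_diagram S \<Longrightarrow> r \<in> removable S \<Longrightarrow> r \<in> addable (S - {r})"
  unfolding young_diagram_def removable_def addable_def by (auto simp: insert_absorb)

lemma card_remove_removable:
  assumes "young_diagram U" "r \<in> removable U"
  shows "card (U - {r}) = card U - 1"
proof -
  have "r \<in> U" using assms(2) removable_subset by blast
  then show ?thesis by (simp add: card_Diff_singleton)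
qed

lemma addable_removable_swap:
  assumes "young_diagram S" "a \<noteq> r"
  shows "a \<in> addable S \<and> r \<in> removable (insert a S) \<longleftrightarrow> r \<in> removable S \<and> a \<in> addable (S - {r})"
proof -
  have dc: "down_closed S" using assms(1) unfolding young_diagram_def by blast
  have swap: "insert a S - {r} = insert a (S - {r})" using assms(2) by blast
  show ?thesis
  proof
    assume "a \<in> addable S \<and> r \<in> removable (insert a S)"
    then have "a \<notin> S" "r \<in> S" and dc': "down_closed (insert a (S - {r}))"
      using assms(2) swap unfolding addable_def removable_def by auto
    moreover have "down_closed (S - {r})"
    proof -
      have "S \<inter> insert a (S - {r}) = S - {r}" using \<open>a \<notin> S\<close> by blast
      then show ?thesis using down_closed_Int[OF dc dc'] by simp
    qed
    ultimately show "r \<in> removable S \<and> a \<in> addable (S - {r})"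
      unfolding addable_def removable_def by auto
  next
    assume "r \<in> removable S \<and> a \<in> addable (S - {r})"
    then have "a \<notin> S" "r \<in> S" and dc': "down_closed (insert a (S - {r}))"
      using assms(2) unfolding addable_def removable_def by auto
    moreover have "down_closed (insert a S)"
    proof -
      have "S \<union> insert a (S - {r}) = insert a S" by blast
      then show ?thesis using down_closed_Un[OF dc dc'] by simp
    qed
    ultimately show "a \<in> addable S \<and> r \<in> removable (insert a S)"
      unfolding addable_def removable_def using swap by auto
  qed
qed

section \<open>Walks in Young's lattice\<close>

fun down_walks :: "nat \<Rightarrow> (nat \<times> nat) set \<Rightarrow> nat" where
  "down_walks 0 S = 1"
| "down_walks (Suc j) S = (\<Sum>r\<in>removable S. down_walks j (S - {r}))"

lemma down_walks_insert:
  assumes "young_diagram S" "a \<in> addable S"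
  shows "down_walks (Suc j) (insert a S) =
    down_walks j S + (\<Sum>r\<in>removable (insert a S) - {a}. down_walks j (insert a (S - {r})))"
proof -
  have "down_walks (Suc j) (insert a S) = (\<Sum>r\<in>removable (insert a S). down_walks j (insert a S - {r}))"
    by simp
  also have "\<dots> = down_walks j (insert a S - {a})
      + (\<Sum>r\<in>removable (insert a S) - {a}. down_walks j (insert a S - {r}))"
    by (rule sum.remove[OF finite_removable[OF young_diagram_insert[OF assms]]
          addable_removable_insert[OF assms]])
  also have "insert a S - {a} = S" using addable_not_mem[OF assms(2)] by blast
  also have "(\<Sum>r\<in>removable (insert a S) - {a}. down_walks j (insert a S - {r}))
      = (\<Sum>r\<in>removable (insert a S) - {a}. down_walks j (insert a (S - {r})))"
    by (rule sum.cong) (auto intro: arg_cong[where f = "down_walks j"])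
  finally show ?thesis .
qed

lemma sum_addable_removable_swap:
  assumes "young_diagram S"
  shows "(\<Sum>a\<in>addable S. \<Sum>r\<in>removable (insert a S) - {a}. g a r)
       = (\<Sum>r\<in>removable S. \<Sum>a\<in>addable (S - {r}) - {r}. g a r)"
proof -
  have fin: "finite (addable S)" "finite S"
    using assms finite_addable unfolding young_diagram_def by auto
  have "(\<Sum>a\<in>addable S. \<Sum>r\<in>removable (insert a S) - {a}. g a r)
      = (\<Sum>a\<in>addable S. \<Sum>r\<in>{r. r \<in> S \<and> r \<in> removable (insert a S) \<and> r \<noteq> a}. g a r)"
    using removable_subset by (intro sum.cong refl arg_cong2[where f = sum]) blast+
  also have "\<dots> = (\<Sum>r\<in>S. \<Sum>a\<in>{a. a \<in> addable S \<and> r \<in> removable (insert a S) \<and> r \<noteq> a}. g a r)"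
    by (rule sum.swap_restrict[OF fin])
  also have "\<dots> = (\<Sum>r\<in>S. \<Sum>a\<in>{a. r \<in> removable S \<and> a \<in> addable (S - {r}) - {r}}. g a r)"
  proof -
    have "a \<in> addable S \<and> r \<in> removable (insert a S) \<and> r \<noteq> a
        \<longleftrightarrow> r \<in> removable S \<and> a \<in> addable (S - {r}) - {r}" for a r
      using addable_removable_swap[OF assms, of a r] by blast
    then show ?thesis by simp
  qed
  also have "\<dots> = (\<Sum>r\<in>removable S. \<Sum>a\<in>{a. r \<in> removable S \<and> a \<in> addable (S - {r}) - {r}}. g a r)"
    using fin(2) removable_subset by (intro sum.mono_neutral_right) auto
  also have "\<dots> = (\<Sum>r\<in>removable S. \<Sum>a\<in>addable (S - {r}) - {r}. g a r)"
    by (intro sum.cong refl) (simp add: set_diff_eq)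
  finally show ?thesis .
qed

lemma sum_removable_down_walks_pred:
  "(\<Sum>r\<in>removable S. j * down_walks (j - 1) (S - {r})) = j * down_walks j S"
  by (cases j) (simp_all add: sum_distrib_left)

text \<open>The walk-counting form of the relation DU = UD + I in Young's lattice.\<close>
lemma sum_addable_down_walks:
  assumes "young_diagram S"
  shows "(\<Sum>a\<in>addable S. down_walks j (insert a S))
       = down_walks (Suc j) S + down_walks j S + j * down_walks (j - 1) S"
  using assms
proof (induction j arbitrary: S)
  case 0
  then show ?case using card_addable by simp
next
  case (Suc j)
  let ?inner = "\<lambda>r. \<Sum>a\<in>addable (S - {r}) - {r}. down_walks j (insert a (S - {r}))"
  have inner: "down_walks j S + ?inner r
      = down_walks (Suc j) (S - {r}) + down_walks j (S - {r}) + j * down_walks (j - 1) (S - {r})"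
    if r: "r \<in> removable S" for r
  proof -
    have S': "young_diagram (S - {r})" using young_diagram_remove[OF Suc.prems r] .
    have "(\<Sum>a\<in>addable (S - {r}). down_walks j (insert a (S - {r})))
        = down_walks j (insert r (S - {r})) + ?inner r"
      by (rule sum.remove[OF finite_addable[OF S'] removable_addable_remove[OF Suc.prems r]])
    also have "insert r (S - {r}) = S" using r removable_subset by blast
    finally show ?thesis using Suc.IH[OF S'] by simp
  qed
  have "(\<Sum>a\<in>addable S. down_walks (Suc j) (insert a S))
      = card (addable S) * down_walks j S
        + (\<Sum>a\<in>addable S. \<Sum>r\<in>removable (insert a S) - {a}. down_walks j (insert a (S - {r})))"
    using down_walks_insert[OF Suc.prems] by (simp add: sum.distrib)
  also have "\<dots> = down_walks j S + (\<Sum>r\<in>removable S. down_walks j S + ?inner r)"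
    using card_addable[OF Suc.prems] sum_addable_removable_swap[OF Suc.prems] by (simp add: sum.distrib)
  also have "\<dots> = down_walks j S + (\<Sum>r\<in>removable S. down_walks (Suc j) (S - {r})
      + down_walks j (S - {r}) + j * down_walks (j - 1) (S - {r}))"
    using inner by simp
  also have "\<dots> = down_walks (Suc (Suc j)) S + down_walks (Suc j) S + Suc j * down_walks j S"
    using sum_removable_down_walks_pred[of j S] by (simp add: sum.distrib)
  finally show ?case by simp
qed

text \<open>The number of involutions of an N-element set with j of their fixed points marked: the
  last point is marked, or an unmarked fixed point, or paired with one of the others.\<close>
fun marked_involutions :: "nat \<Rightarrow> nat \<Rightarrow> nat" where
  "marked_involutions 0 j = (if j = 0 then 1 else 0)"
| "marked_involutions (Suc r) j = (if j = 0 then 0 else marked_involutions r (j - 1))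
     + marked_involutions r j + r * marked_involutions (r - 1) j"

declare marked_involutions.simps(2) [simp del]

lemma marked_involutions_eq_0: "r < j \<Longrightarrow> marked_involutions r j = 0"
  by (induction r j rule: marked_involutions.induct) (auto simp: marked_involutions.simps(2))

lemma Suc_mult_marked_involutions:
  "Suc j * marked_involutions r (Suc j) = r * marked_involutions (r - 1) j"
proof (induction r arbitrary: j rule: less_induct)
  case (less r)
  show ?case
  proof (cases r)
    case 0
    then show ?thesis by simp
  next
    case (Suc q)
    have IH: "Suc i * marked_involutions p (Suc i) = p * marked_involutions (p - 1) i" if "p \<le> q" for p i
      using less.IH[of p i] that Suc by simp
    have "Suc j * marked_involutions r (Suc j) = Suc j * marked_involutions q j
        + Suc j * marked_involutions q (Suc j) + q * (Suc j * marked_involutions (q - 1) (Suc j))"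
      unfolding Suc marked_involutions.simps(2)[of q] by (simp add: algebra_simps)
    also have "\<dots> = marked_involutions q j + j * marked_involutions q j
        + q * marked_involutions (q - 1) j + q * ((q - 1) * marked_involutions (q - 1 - 1) j)"
      using IH[of q j] IH[of "q - 1" j] by simp
    also have "\<dots> = Suc q * marked_involutions q j"
    proof (cases q)
      case 0
      then show ?thesis by (cases j) simp_all
    next
      case (Suc p)
      have "j * marked_involutions q j = (if j = 0 then 0 else q * marked_involutions p (j - 1))"
        using IH[of q "j - 1"] Suc by (cases j) simp_all
      then show ?thesis using Suc by (simp add: marked_involutions.simps(2) algebra_simps)
    qed
    finally show ?thesis using Suc by simp
  qed
qed

text \<open>This is C(p, r): the number of involutions of p + r points increasing on the first p.\<close>
definition count_incr_involutions :: "nat \<Rightarrow> nat \<Rightarrow> nat" where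
  "count_incr_involutions p r = (\<Sum>j\<le>p. marked_involutions r j)"

lemma count_incr_involutions_0: "count_incr_involutions p 0 = 1"
  unfolding count_incr_involutions_def by (simp add: sum.delta)

lemma count_incr_involutions_Suc:
  "count_incr_involutions p (Suc r) = count_incr_involutions p r + r * count_incr_involutions p (r - 1)
     + (if p = 0 then 0 else count_incr_involutions (p - 1) r)"
proof -
  have "(\<Sum>j\<le>p. if j = 0 then 0 else marked_involutions r (j - 1))
      = (if p = 0 then 0 else count_incr_involutions (p - 1) r)"
  proof (cases p)
    case (Suc q)
    then show ?thesis unfolding count_incr_involutions_def Suc sum.atMost_Suc_shift by simp
  qed simp
  then show ?thesis
    unfolding count_incr_involutions_def
    by (simp add: marked_involutions.simps(2) sum.distrib sum_distrib_left)
qed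

fun up_walks :: "nat \<Rightarrow> (nat \<times> nat) set \<Rightarrow> nat" where
  "up_walks 0 S = 1"
| "up_walks (Suc N) S = (\<Sum>a\<in>addable S. up_walks N (insert a S))"

text \<open>Normal ordering of U^N by the commutation relation above; its coefficients satisfy the
  recurrence of marked_involutions.\<close>
lemma up_walks_eq_sum_down_walks:
  assumes "young_diagram S" "N \<le> B"
  shows "up_walks N S = (\<Sum>j\<le>B. marked_involutions N j * down_walks j S)"
  using assms
proof (induction N arbitrary: S B)
  case 0
  then show ?case by (simp add: sum.delta if_distrib[of "\<lambda>x. x * _"] cong: if_cong)
next
  case (Suc N)
  obtain B' where B: "B = Suc B'" and NB: "N \<le> B'" using Suc.prems(2) by (cases B) auto
  let ?m = "marked_involutions N"
  have "up_walks (Suc N) S = (\<Sum>j\<le>B. ?m j * (\<Sum>a\<in>addable S. down_walks j (insert a S)))"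
    using Suc.IH[OF young_diagram_insert[OF Suc.prems(1)], of _ B] NB B
    by (simp add: sum.swap[of _ "addable S"] sum_distrib_left)
  also have "\<dots> = (\<Sum>j\<le>B. ?m j * down_walks (Suc j) S) + (\<Sum>j\<le>B. ?m j * down_walks j S)
      + (\<Sum>j\<le>B. ?m j * (j * down_walks (j - 1) S))"
    by (simp add: sum_addable_down_walks[OF Suc.prems(1)] algebra_simps sum.distrib)
  also have "(\<Sum>j\<le>B. ?m j * down_walks (Suc j) S)
      = (\<Sum>j\<le>B. (if j = 0 then 0 else ?m (j - 1)) * down_walks j S)"
  proof -
    have "(\<Sum>j\<le>B. (if j = 0 then 0 else ?m (j - 1)) * down_walks j S)
        = (\<Sum>j\<le>B'. ?m j * down_walks (Suc j) S)"
      unfolding B sum.atMost_Suc_shift by (simp del: down_walks.simps)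
    also have "\<dots> = (\<Sum>j\<le>B. ?m j * down_walks (Suc j) S)"
      unfolding B using marked_involutions_eq_0[of N "Suc B'"] NB by (simp del: down_walks.simps)
    finally show ?thesis by simp
  qed
  also have "(\<Sum>j\<le>B. ?m j * (j * down_walks (j - 1) S))
      = (\<Sum>j\<le>B. N * marked_involutions (N - 1) j * down_walks j S)"
  proof -
    have "(\<Sum>j\<le>B. ?m j * (j * down_walks (j - 1) S)) = (\<Sum>j\<le>B'. Suc j * ?m (Suc j) * down_walks j S)"
      unfolding B sum.atMost_Suc_shift by (simp add: algebra_simps)
    also have "\<dots> = (\<Sum>j\<le>B. Suc j * ?m (Suc j) * down_walks j S)"
      unfolding B using marked_involutions_eq_0[of N "Suc (Suc B')"] NB by simp
    finally show ?thesis unfolding Suc_mult_marked_involutions .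
  qed
  finally show ?case
    by (simp add: marked_involutions.simps(2) algebra_simps sum.distrib)
qed

fun walks_between :: "nat \<Rightarrow> (nat \<times> nat) set \<Rightarrow> (nat \<times> nat) set \<Rightarrow> nat" where
  "walks_between 0 U S = (if U = S then 1 else 0)"
| "walks_between (Suc N) U S = (\<Sum>r\<in>removable U. walks_between N (U - {r}) S)"

lemma walks_between_Suc_up:
  assumes "young_diagram U" "young_diagram S"
  shows "walks_between (Suc N) U S = (\<Sum>a\<in>addable S. walks_between N U (insert a S))"
  using assms(1)
proof (induction N arbitrary: U)
  case 0
  have "{r \<in> removable U. U - {r} = S} = {a \<in> addable S. U = insert a S}"
    using assms(2) removable_subset[of U] 0 unfolding young_diagram_def removable_def addable_def
    by (auto simp: insert_absorb)
  then have "card {r \<in> removable U. U - {r} = S} = card {a \<in> addable S. U = insert a S}"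
    by simp
  then show ?case
    using finite_removable[OF 0] finite_addable[OF assms(2)] by (simp add: sum.inter_filter[symmetric])
next
  case (Suc N)
  have "walks_between (Suc (Suc N)) U S
      = (\<Sum>r\<in>removable U. \<Sum>a\<in>addable S. walks_between N (U - {r}) (insert a S))"
    using Suc.IH[OF young_diagram_remove[OF Suc.prems]] by simp
  then show ?case by (simp add: sum.swap[of _ "removable U"])
qed

definition diagrams_of_size :: "nat \<Rightarrow> (nat \<times> nat) set set" where
  "diagrams_of_size n = {U. young_diagram U \<and> card U = n}"

lemma young_diagram_mem_bound:
  assumes "young_diagram U" "(i, j) \<in> U"
  shows "i < card U \<and> j < card U"
proof
  have "(\<lambda>i'. (i', 0)) ` {..i} \<subseteq> U"
    using assms down_closedD unfolding young_diagram_def by blast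
  then have "card ((\<lambda>i'. (i', 0::nat)) ` {..i}) \<le> card U"
    using assms(1) card_mono unfolding young_diagram_def by blast
  then show "i < card U" by (simp add: card_image inj_on_def)
next
  have "(\<lambda>j'. (0, j')) ` {..j} \<subseteq> U"
    using assms down_closedD unfolding young_diagram_def by blast
  then have "card ((\<lambda>j'. (0::nat, j')) ` {..j}) \<le> card U"
    using assms(1) card_mono unfolding young_diagram_def by blast
  then show "j < card U" by (simp add: card_image inj_on_def)
qed

lemma finite_diagrams_of_size: "finite (diagrams_of_size n)"
proof -
  have "diagrams_of_size n \<subseteq> Pow ({..<n} \<times> {..<n})"
    unfolding diagrams_of_size_def using young_diagram_mem_bound by fastforce
  then show ?thesis by (rule finite_subset) simp
qed

lemma up_walks_eq_sum_walks_between: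
  assumes "young_diagram S"
  shows "up_walks N S = (\<Sum>U\<in>diagrams_of_size (card S + N). walks_between N U S)"
  using assms
proof (induction N arbitrary: S)
  case 0
  then have "S \<in> diagrams_of_size (card S)" unfolding diagrams_of_size_def by simp
  then show ?case using finite_diagrams_of_size by (simp add: sum.delta)
next
  case (Suc N)
  have "(\<Sum>U\<in>diagrams_of_size (card S + Suc N). walks_between (Suc N) U S)
      = (\<Sum>a\<in>addable S. \<Sum>U\<in>diagrams_of_size (card S + Suc N). walks_between N U (insert a S))"
    using walks_between_Suc_up[OF _ Suc.prems]
    unfolding diagrams_of_size_def by (simp add: sum.swap[of _ "addable S"])
  also have "\<dots> = (\<Sum>a\<in>addable S. up_walks N (insert a S))"
  proof (rule sum.cong[OF refl])
    fix a assume a: "a \<in> addable S"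
    have "card (insert a S) + N = card S + Suc N"
      using addable_not_mem[OF a] Suc.prems unfolding young_diagram_def by simp
    then show "(\<Sum>U\<in>diagrams_of_size (card S + Suc N). walks_between N U (insert a S))
        = up_walks N (insert a S)"
      using Suc.IH[OF young_diagram_insert[OF Suc.prems a]] by simp
  qed
  finally show ?case by simp
qed

section \<open>Standard tableaux\<close>

definition standard_tableau :: "(nat \<times> nat) set \<Rightarrow> (nat \<times> nat \<Rightarrow> nat) \<Rightarrow> bool" where
  "standard_tableau U T \<longleftrightarrow> bij_betw T U {1..card U} \<and> (\<forall>c. c \<notin> U \<longrightarrow> T c = 0)
     \<and> (\<forall>i j. (i, Suc j) \<in> U \<longrightarrow> T (i, j) < T (i, Suc j))
     \<and> (\<forall>i j. (Suc i, j) \<in> U \<longrightarrow> T (i, j) < T (Suc i, j))"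

definition tableaux :: "(nat \<times> nat) set \<Rightarrow> (nat \<times> nat \<Rightarrow> nat) set" where
  "tableaux U = {T. standard_tableau U T}"

lemma standard_tableau_range:
  assumes "standard_tableau U T" "c \<in> U"
  shows "T c \<in> {1..card U}"
  using assms(1) bij_betw_apply[OF _ assms(2)] unfolding standard_tableau_def by blast

lemma standard_tableau_outside: "standard_tableau U T \<Longrightarrow> c \<notin> U \<Longrightarrow> T c = 0"
  unfolding standard_tableau_def by blast

lemma standard_tableau_le_card: "standard_tableau U T \<Longrightarrow> T c \<le> card U"
  by (cases "c \<in> U") (auto dest: standard_tableau_range standard_tableau_outside)

lemma bij_betw_fun_upd_insert:
  assumes "a \<notin> A" "b \<notin> B"
  shows "bij_betw (f(a := b)) (insert a A) (insert b B) \<longleftrightarrow> bij_betw f A B"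
proof -
  have "bij_betw (f(a := b)) A B \<longleftrightarrow> bij_betw f A B"
    using assms(1) by (intro bij_betw_cong) auto
  then show ?thesis
    using notIn_Un_bij_betw3[of a A "f(a := b)" B] assms by simp
qed

lemma standard_tableau_extend:
  assumes U: "young_diagram U" "card U = Suc N" and r: "r \<in> removable U"
    and T: "standard_tableau (U - {r}) T"
  shows "standard_tableau U (T(r := Suc N))"
proof -
  obtain ri rj where rr: "r = (ri, rj)" by fastforce
  have "r \<in> U" using r removable_subset by blast
  then have card: "card (U - {r}) = N" and ins: "insert r (U - {r}) = U"
    using U unfolding young_diagram_def by auto
  have le: "T c < Suc N" for c using standard_tableau_le_card[OF T, of c] card by simp
  have "bij_betw (T(r := Suc N)) U {1..card U}"
    using T bij_betw_fun_upd_insert[of r "U - {r}" "Suc N" "{1..N}" T] ins card U(2)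
    unfolding standard_tableau_def by (simp add: atLeastAtMostSuc_conv)
  moreover have "\<forall>c. c \<notin> U \<longrightarrow> (T(r := Suc N)) c = 0"
    using T \<open>r \<in> U\<close> unfolding standard_tableau_def by auto
  moreover have "(T(r := Suc N)) (i, j) < (T(r := Suc N)) (i, Suc j)" if "(i, Suc j) \<in> U" for i j
  proof -
    have "(i, j) \<noteq> r" using removable_corner[OF U(1) r[unfolded rr]] that rr by auto
    then show ?thesis
      using T that le unfolding standard_tableau_def by (cases "(i, Suc j) = r") auto
  qed
  moreover have "(T(r := Suc N)) (i, j) < (T(r := Suc N)) (Suc i, j)" if "(Suc i, j) \<in> U" for i j
  proof -
    have "(i, j) \<noteq> r" using removable_corner[OF U(1) r[unfolded rr]] that rr by auto
    then show ?thesis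
      using T that le unfolding standard_tableau_def by (cases "(Suc i, j) = r") auto
  qed
  ultimately show ?thesis unfolding standard_tableau_def by blast
qed

lemma standard_tableau_max_removable:
  assumes U: "young_diagram U" and T: "standard_tableau U T" and r: "r \<in> U" "T r = card U"
  shows "r \<in> removable U"
proof -
  obtain i j where rr: "r = (i, j)" by fastforce
  have "T (i, j) < T c \<Longrightarrow> False" for c
    using standard_tableau_le_card[OF T, of c] r(2) rr by simp
  then have "(Suc i, j) \<notin> U" "(i, Suc j) \<notin> U"
    using T unfolding standard_tableau_def by blast+
  then show ?thesis
    using down_closed_remove_iff[of U i j] r(1) U rr unfolding removable_def young_diagram_def by auto
qed

lemma standard_tableau_restrict_max:
  assumes U: "young_diagram U" "card U = Suc N" and T: "standard_tableau U T"
  obtains r where "r \<in> removable U" "T r = Suc N" "standard_tableau (U - {r}) (T(r := 0))"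
proof -
  have bij: "bij_betw T U {1..Suc N}" and out: "\<forall>c. c \<notin> U \<longrightarrow> T c = 0"
    and row: "\<forall>i j. (i, Suc j) \<in> U \<longrightarrow> T (i, j) < T (i, Suc j)"
    and col: "\<forall>i j. (Suc i, j) \<in> U \<longrightarrow> T (i, j) < T (Suc i, j)"
    using T U(2) unfolding standard_tableau_def by simp_all
  then have "Suc N \<in> T ` U" unfolding bij_betw_def by simp
  then obtain r where "r \<in> U" and Tr: "T r = Suc N" by auto
  then have r: "r \<in> removable U" using standard_tableau_max_removable[OF U(1) T] U(2) by simp
  obtain ri rj where rr: "r = (ri, rj)" by fastforce
  have row': "\<forall>i j. (i, Suc j) \<in> U - {r} \<longrightarrow> (i, j) \<noteq> r"
    and col': "\<forall>i j. (Suc i, j) \<in> U - {r} \<longrightarrow> (i, j) \<noteq> r"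
    using removable_corner[OF U(1) r[unfolded rr]] rr by auto
  have card: "card (U - {r}) = N" and ins: "insert r (U - {r}) = U"
    using U \<open>r \<in> U\<close> unfolding young_diagram_def by auto
  have "(T(r := 0))(r := Suc N) = T" using Tr by (simp add: fun_upd_idem)
  moreover have "insert (Suc N) {1..N} = {1..Suc N}" by auto
  ultimately have "bij_betw (T(r := 0)) (U - {r}) {1..card (U - {r})}"
    using bij bij_betw_fun_upd_insert[of r "U - {r}" "Suc N" "{1..N}" "T(r := 0)"] ins card by simp
  moreover have "\<forall>c. c \<notin> U - {r} \<longrightarrow> (T(r := 0)) c = 0" using out by simp
  moreover have "\<forall>i j. (i, Suc j) \<in> U - {r} \<longrightarrow> (T(r := 0)) (i, j) < (T(r := 0)) (i, Suc j)"
    using row row' by simp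
  moreover have "\<forall>i j. (Suc i, j) \<in> U - {r} \<longrightarrow> (T(r := 0)) (i, j) < (T(r := 0)) (Suc i, j)"
    using col col' by simp
  ultimately have "standard_tableau (U - {r}) (T(r := 0))"
    unfolding standard_tableau_def by blast
  then show ?thesis using that r Tr by blast
qed

lemma tableaux_eq_UN_removable:
  assumes "young_diagram U" "card U = Suc N"
  shows "tableaux U = (\<Union>r\<in>removable U. (\<lambda>T. T(r := Suc N)) ` tableaux (U - {r}))"
proof (intro equalityI subsetI)
  fix T assume "T \<in> tableaux U"
  then obtain r where "r \<in> removable U" "T r = Suc N" "T(r := 0) \<in> tableaux (U - {r})"
    using standard_tableau_restrict_max[OF assms] unfolding tableaux_def by blast
  moreover have "T = (T(r := 0))(r := Suc N)" using \<open>T r = Suc N\<close> by (simp add: fun_upd_idem)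
  ultimately show "T \<in> (\<Union>r\<in>removable U. (\<lambda>T. T(r := Suc N)) ` tableaux (U - {r}))" by blast
qed (use standard_tableau_extend[OF assms] in \<open>auto simp: tableaux_def\<close>)

lemma finite_tableaux:
  assumes "finite U"
  shows "finite (tableaux U)"
proof -
  have "tableaux U \<subseteq> {T. \<forall>c. (c \<in> U \<longrightarrow> T c \<in> {1..card U}) \<and> (c \<notin> U \<longrightarrow> T c = 0)}"
  proof
    fix T assume "T \<in> tableaux U"
    then show "T \<in> {T. \<forall>c. (c \<in> U \<longrightarrow> T c \<in> {1..card U}) \<and> (c \<notin> U \<longrightarrow> T c = 0)}"
      using standard_tableau_range standard_tableau_outside unfolding tableaux_def by auto
  qed
  then show ?thesis
    by (rule finite_subset) (intro finite_set_of_finite_funs assms finite_atLeastAtMost)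
qed

lemma inj_on_fun_upd_tableaux: "inj_on (\<lambda>T. T(r := m)) (tableaux (U - {r}))"
proof (rule inj_onI)
  fix T T' assume "T \<in> tableaux (U - {r})" "T' \<in> tableaux (U - {r})" "T(r := m) = T'(r := m)"
  moreover have "T r = 0" "T' r = 0"
    using calculation(1,2) standard_tableau_outside unfolding tableaux_def by blast+
  ultimately show "T = T'" by (metis fun_upd_triv fun_upd_upd)
qed

lemma card_UN_tableaux_fun_upd:
  assumes U: "young_diagram U" "card U = Suc N"
    and X: "\<And>r. r \<in> removable U \<Longrightarrow> X r \<subseteq> tableaux (U - {r})"
  shows "card (\<Union>r\<in>removable U. (\<lambda>T. T(r := Suc N)) ` X r) = (\<Sum>r\<in>removable U. card (X r))"
proof -
  have fin: "finite (X r)" if "r \<in> removable U" for r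
    using finite_tableaux[of "U - {r}"] X[OF that] U(1) finite_subset
    unfolding young_diagram_def by blast
  have card_r: "card (U - {r}) = N" if "r \<in> removable U" for r
    using card_remove_removable[OF U(1) that] U(2) by simp
  have "(\<lambda>T. T(r := Suc N)) ` X r \<inter> (\<lambda>T. T(r' := Suc N)) ` X r' = {}"
    if "r \<in> removable U" "r' \<in> removable U" "r \<noteq> r'" for r r'
  proof -
    have "T' r \<noteq> Suc N" if "T' \<in> X r'" for T'
      using standard_tableau_le_card[of "U - {r'}" T' r] X[OF \<open>r' \<in> removable U\<close>] that
        card_r[OF \<open>r' \<in> removable U\<close>] unfolding tableaux_def by auto
    then have "T(r := Suc N) \<noteq> T'(r' := Suc N)" if "T' \<in> X r'" for T T'
      using that \<open>r \<noteq> r'\<close> by (metis fun_upd_other fun_upd_same)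
    then show ?thesis by blast
  qed
  moreover have "inj_on (\<lambda>T. T(r := Suc N)) (X r)" if "r \<in> removable U" for r
    using inj_on_fun_upd_tableaux X[OF that] by (rule inj_on_subset)
  ultimately have "card (\<Union>r\<in>removable U. (\<lambda>T. T(r := Suc N)) ` X r)
      = (\<Sum>r\<in>removable U. card ((\<lambda>T. T(r := Suc N)) ` X r))"
    using fin finite_removable[OF U(1)] by (intro card_UN_disjoint) auto
  also have "\<dots> = (\<Sum>r\<in>removable U. card (X r))"
    using \<open>\<And>r. r \<in> removable U \<Longrightarrow> inj_on _ (X r)\<close> by (intro sum.cong refl card_image)
  finally show ?thesis .
qed

lemma card_tableaux:
  assumes "young_diagram U"
  shows "card (tableaux U) = down_walks (card U) U"
  using assms
proof (induction "card U" arbitrary: U)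
  case 0
  then have "U = {}" unfolding young_diagram_def by simp
  then have "tableaux U = {\<lambda>_. 0}"
    unfolding tableaux_def standard_tableau_def by (auto simp: bij_betw_def fun_eq_iff)
  then show ?case using \<open>U = {}\<close> by simp
next
  case (Suc N)
  have "card (tableaux U) = (\<Sum>r\<in>removable U. card (tableaux (U - {r})))"
    unfolding tableaux_eq_UN_removable[OF Suc.prems Suc.hyps(2)[symmetric]]
    by (rule card_UN_tableaux_fun_upd[OF Suc.prems Suc.hyps(2)[symmetric]]) simp
  also have "\<dots> = (\<Sum>r\<in>removable U. down_walks N (U - {r}))"
  proof (rule sum.cong[OF refl])
    fix r assume r: "r \<in> removable U"
    then have "card (U - {r}) = N"
      using card_remove_removable[OF Suc.prems r] Suc.hyps(2) by simp
    then show "card (tableaux (U - {r})) = down_walks N (U - {r})"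
      using Suc.hyps(1) young_diagram_remove[OF Suc.prems r] by simp
  qed
  finally show ?case using Suc.hyps(2)[symmetric] by simp
qed

section \<open>The tableau count f(n, k)\<close>

definition tableaux_at :: "nat \<times> nat \<Rightarrow> nat \<Rightarrow> (nat \<times> nat) set \<Rightarrow> (nat \<times> nat \<Rightarrow> nat) set" where
  "tableaux_at c k U = {T \<in> tableaux U. T c = k}"

lemma tableaux_at_eq_UN_removable:
  assumes "young_diagram U" "card U = Suc N" "0 < k" "k \<le> N"
  shows "tableaux_at c k U = (\<Union>r\<in>removable U. (\<lambda>T. T(r := Suc N)) ` tableaux_at c k (U - {r}))"
proof -
  have "(T(r := Suc N)) c = k \<longleftrightarrow> T c = k" if "T \<in> tableaux (U - {r})" for T r
    using that standard_tableau_outside[of "U - {r}" T r] assms(3,4) unfolding tableaux_def by auto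
  then show ?thesis
    unfolding tableaux_at_def tableaux_eq_UN_removable[OF assms(1,2)] by blast
qed

lemma tableaux_at_max:
  assumes "young_diagram U" "card U = Suc N"
  shows "tableaux_at c (Suc N) U
    = (if c \<in> removable U then (\<lambda>T. T(c := Suc N)) ` tableaux (U - {c}) else {})"
proof -
  have "(T(r := Suc N)) c = Suc N \<longleftrightarrow> r = c" if "T \<in> tableaux (U - {r})" "r \<in> removable U" for T r
    using that standard_tableau_le_card[of "U - {r}" T c] card_remove_removable[OF assms(1)]
    unfolding tableaux_def assms(2) by auto
  then show ?thesis
    unfolding tableaux_at_def tableaux_eq_UN_removable[OF assms] by auto
qed

definition column :: "nat \<Rightarrow> (nat \<times> nat) set" where
  "column p = {..<p} \<times> {0}"

lemma young_diagram_column: "young_diagram (column p)"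
  unfolding young_diagram_def column_def by (auto intro!: down_closedI)

lemma card_column: "card (column p) = p"
  unfolding column_def by (simp add: card_cartesian_product)

lemma insert_column: "insert (p, 0) (column p) = column (Suc p)"
  unfolding column_def by auto

lemma removable_column_Suc: "removable (column (Suc p)) = {(p, 0)}"
  using down_closed_remove_iff[OF young_diagram_column[unfolded young_diagram_def, THEN conjunct2]]
  unfolding removable_def column_def by auto

lemma down_walks_column: "down_walks j (column p) = (if j \<le> p then 1 else 0)"
proof (induction j arbitrary: p)
  case (Suc j)
  show ?case
  proof (cases p)
    case 0
    then show ?thesis by (simp add: column_def removable_def)
  next
    case (Suc q)
    have "column (Suc q) - {(q, 0)} = column q" unfolding column_def by auto
    then show ?thesis using Suc.IH Suc by (simp add: removable_column_Suc)
  qed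
qed simp

lemma addable_column:
  assumes "0 < p"
  shows "addable (column p) = {(p, 0), (0, 1)}"
proof (rule set_eqI)
  fix c :: "nat \<times> nat"
  obtain i j where c: "c = (i, j)" by fastforce
  show "c \<in> addable (column p) \<longleftrightarrow> c \<in> {(p, 0), (0, 1)}"
    using down_closed_insert_iff[of "column p" i j] young_diagram_column assms
    unfolding c addable_def young_diagram_def column_def by auto
qed

lemma eq_column_card:
  assumes "young_diagram V" "(0, 1) \<notin> V"
  shows "V = column (card V)"
proof -
  have "j = 0" if "(i, j) \<in> V" for i j
    using assms down_closedD[of V i j 0 1] that unfolding young_diagram_def by (cases j) auto
  then have V: "V = {i. (i, 0) \<in> V} \<times> {0}" by auto
  have "{i. (i, 0) \<in> V} \<subseteq> fst ` V" by force
  then have "finite {i. (i, 0) \<in> V}"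
    using assms(1) finite_subset unfolding young_diagram_def by blast
  then have "{i. (i, 0) \<in> V} = {..<card {i. (i, 0) \<in> V}}"
    using assms(1) unfolding young_diagram_def by (intro down_closed_nat_eq_lessThan) (auto dest: down_closedD)
  moreover have "card V = card {i. (i, 0) \<in> V}"
    by (subst V) (simp add: card_cartesian_product)
  ultimately show ?thesis using V unfolding column_def by simp
qed

text \<open>The cells holding 1, ..., k in a tableau whose entry at (0, 1) is k.\<close>
definition corner_shape :: "nat \<Rightarrow> (nat \<times> nat) set" where
  "corner_shape k = insert (0, 1) (column (k - 1))"

lemma corner_shape:
  assumes "2 \<le> k"
  shows "young_diagram (corner_shape k)" "card (corner_shape k) = k"
    "(0, 1) \<in> removable (corner_shape k)" "corner_shape k - {(0, 1)} = column (k - 1)"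
proof -
  have dc: "down_closed (column (k - 1))" and fin: "finite (column (k - 1))"
    using young_diagram_column unfolding young_diagram_def by auto
  have "(0, 0) \<in> column (k - 1)" "(0, 1) \<notin> column (k - 1)"
    using assms unfolding column_def by auto
  then show "young_diagram (corner_shape k)" "card (corner_shape k) = k"
    and rem: "corner_shape k - {(0, 1)} = column (k - 1)"
    using down_closed_insert_iff[OF dc, of 0 1] fin card_column[of "k - 1"] assms
    unfolding corner_shape_def young_diagram_def by auto
  then show "(0, 1) \<in> removable (corner_shape k)"
    using dc unfolding removable_def corner_shape_def by simp
qed

lemma card_tableaux_at_max_corner:
  assumes U: "young_diagram U" "card U = k" and k: "2 \<le> k"
  shows "card (tableaux_at (0, 1) k U) = (if U = corner_shape k then 1 else 0)"
proof -
  obtain N where N: "k = Suc N" using k by (cases k) auto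
  show ?thesis
  proof (cases "(0, 1) \<in> removable U")
    case True
    let ?V = "U - {(0, 1)}"
    have V: "young_diagram ?V" "card ?V = N"
      using young_diagram_remove[OF U(1) True] card_remove_removable[OF U(1) True] U(2) N by auto
    then have "?V = column N" using eq_column_card[OF V(1)] by simp
    then have "U = corner_shape k"
      using True removable_subset N unfolding corner_shape_def by auto
    moreover have "card (tableaux_at (0, 1) k U) = card (tableaux ?V)"
      using tableaux_at_max[OF U(1), of N] True U(2) N inj_on_fun_upd_tableaux by (simp add: card_image)
    ultimately show ?thesis
      using card_tableaux[OF V(1)] \<open>?V = column N\<close> down_walks_column V(2) by simp
  next
    case False
    then show ?thesis
      using tableaux_at_max[OF U(1), of N] U(2) N corner_shape(3)[OF k] by auto
  qed
qed

lemma card_tableaux_at_corner: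
  assumes "young_diagram U" "2 \<le> k" "k \<le> card U"
  shows "card (tableaux_at (0, 1) k U) = walks_between (card U - k) U (corner_shape k)"
  using assms
proof (induction "card U" arbitrary: U)
  case 0
  then show ?case by simp
next
  case (Suc N)
  show ?case
  proof (cases "k = Suc N")
    case True
    then show ?thesis using card_tableaux_at_max_corner[OF Suc.prems(1) _ Suc.prems(2)] Suc.hyps(2) by simp
  next
    case False
    then have "k \<le> N" "0 < k" using Suc.prems(2,3) Suc.hyps(2) by simp_all
    have card_r: "card (U - {r}) = N" if "r \<in> removable U" for r
      using card_remove_removable[OF Suc.prems(1) that] Suc.hyps(2) by simp
    have "card (tableaux_at (0, 1) k U) = (\<Sum>r\<in>removable U. card (tableaux_at (0, 1) k (U - {r})))"
      unfolding tableaux_at_eq_UN_removable[OF Suc.prems(1) Suc.hyps(2)[symmetric] \<open>0 < k\<close> \<open>k \<le> N\<close>]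
      by (rule card_UN_tableaux_fun_upd[OF Suc.prems(1) Suc.hyps(2)[symmetric]])
        (auto simp: tableaux_at_def)
    also have "\<dots> = (\<Sum>r\<in>removable U. walks_between (N - k) (U - {r}) (corner_shape k))"
      using Suc.hyps(1) card_r young_diagram_remove[OF Suc.prems(1)] Suc.prems(2) \<open>k \<le> N\<close>
      by (intro sum.cong) auto
    also have "\<dots> = walks_between (card U - k) U (corner_shape k)"
      using \<open>k \<le> N\<close> Suc.hyps(2)[symmetric] by (simp add: Suc_diff_le)
    finally show ?thesis .
  qed
qed

lemma cells_eq_UN: "cells lam = (\<Union>i<length lam. {i} \<times> {..<lam ! i})"
  unfolding cells_def by auto

lemma card_cells: "card (cells lam) = sum_list lam"
  unfolding cells_eq_UN
  by (subst card_UN_disjoint) (auto simp: card_cartesian_product sum_list_sum_nth atLeast0LessThan)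

lemma young_diagram_cells:
  assumes "is_partition lam"
  shows "young_diagram (cells lam)"
proof -
  have "lam ! i \<le> lam ! i'" if "i' \<le> i" "i < length lam" for i i'
    using assms that sorted_wrt_nth_less[of "(\<ge>)" lam i' i] unfolding is_partition_def
    by (cases "i' = i") auto
  then have "down_closed (cells lam)"
    unfolding cells_def by (fastforce intro!: down_closedI)
  then show ?thesis unfolding young_diagram_def cells_eq_UN by simp
qed

lemma young_diagram_eq_cells:
  assumes U: "young_diagram U"
  obtains lam where "is_partition lam" "cells lam = U"
proof -
  let ?I = "{i. (i, 0) \<in> U}"
  have "?I \<subseteq> fst ` U" by force
  then have "finite ?I" using U finite_subset unfolding young_diagram_def by blast
  then have "?I = {..<card ?I}"
    using U unfolding young_diagram_def by (intro down_closed_nat_eq_lessThan) (auto dest: down_closedD)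
  then obtain R where I: "?I = {..<R}" by blast
  define lam where "lam = map (row_len U) [0..<R]"
  have mem: "(i, j) \<in> U \<longleftrightarrow> i < R \<and> j < row_len U i" for i j
  proof -
    have "(i, j) \<in> U \<longleftrightarrow> (i, 0) \<in> U \<and> j < row_len U i"
      using mem_iff_less_row_len[OF U] by auto
    then show ?thesis using I by blast
  qed
  have "cells lam = U"
  proof (rule set_eqI)
    fix c :: "nat \<times> nat"
    obtain i j where c: "c = (i, j)" by fastforce
    show "c \<in> cells lam \<longleftrightarrow> c \<in> U" unfolding c mem cells_def lam_def by auto
  qed
  moreover have "sorted_wrt (\<ge>) lam"
    unfolding lam_def sorted_wrt_map
    by (rule sorted_wrt_mono_rel[OF _ sorted_wrt_upt]) (use row_len_antimono[OF U] in auto)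
  moreover have "\<forall>x\<in>set lam. 0 < x"
    using I mem_iff_less_row_len[OF U] unfolding lam_def by auto
  ultimately show ?thesis using that unfolding is_partition_def by blast
qed

lemma syt_iff_standard_tableau: "syt lam T \<longleftrightarrow> is_partition lam \<and> standard_tableau (cells lam) T"
  unfolding syt_def standard_tableau_def card_cells by blast

lemma f_count_set_eq_UN:
  assumes "0 < k"
  shows "{T. \<exists>lam. syt lam T \<and> sum_list lam = n \<and> lam \<noteq> [] \<and> lam ! 0 > 1 \<and> T (0, 1) = k}
      = (\<Union>U\<in>diagrams_of_size n. tableaux_at (0, 1) k U)" (is "?L = ?R")
proof (intro equalityI subsetI)
  fix T assume "T \<in> ?L"
  then obtain lam where "syt lam T" "sum_list lam = n" "T (0, 1) = k" by blast
  then show "T \<in> ?R"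
    using young_diagram_cells card_cells
    unfolding syt_iff_standard_tableau diagrams_of_size_def tableaux_at_def tableaux_def by fastforce
next
  fix T assume "T \<in> ?R"
  then obtain U where U: "young_diagram U" "card U = n" and T: "standard_tableau U T" "T (0, 1) = k"
    unfolding diagrams_of_size_def tableaux_at_def tableaux_def by blast
  obtain lam where lam: "is_partition lam" "cells lam = U" using young_diagram_eq_cells[OF U(1)] .
  have "(0, 1) \<in> U" using standard_tableau_outside[OF T(1)] T(2) assms by fastforce
  then have "lam \<noteq> [] \<and> lam ! 0 > 1" using lam(2) unfolding cells_def by auto
  then show "T \<in> ?L"
    using lam T U(2) card_cells[of lam] unfolding syt_iff_standard_tableau by auto
qed

lemma tableaux_at_disjoint: "U \<noteq> V \<Longrightarrow> tableaux_at c k U \<inter> tableaux_at c k V = {}"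
proof -
  have "U = {c. T c \<noteq> 0}" if "T \<in> tableaux_at c k U" for T U
    using that standard_tableau_range standard_tableau_outside
    unfolding tableaux_at_def tableaux_def by fastforce
  then show "U \<noteq> V \<Longrightarrow> ?thesis" by blast
qed

lemma f_count_eq_up_walks:
  assumes "2 \<le> k" "k \<le> n"
  shows "f_count n k = up_walks (n - k) (corner_shape k)"
proof -
  have "0 < k" using assms(1) by simp
  have "finite (tableaux_at (0, 1) k U)" if "U \<in> diagrams_of_size n" for U
    using that finite_tableaux unfolding tableaux_at_def diagrams_of_size_def young_diagram_def by auto
  then have "f_count n k = (\<Sum>U\<in>diagrams_of_size n. card (tableaux_at (0, 1) k U))"
    using finite_diagrams_of_size unfolding f_count_def f_count_set_eq_UN[OF \<open>0 < k\<close>]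
    by (simp add: card_UN_disjoint tableaux_at_disjoint)
  also have "\<dots> = (\<Sum>U\<in>diagrams_of_size n. walks_between (n - k) U (corner_shape k))"
    using card_tableaux_at_corner assms by (intro sum.cong) (auto simp: diagrams_of_size_def)
  also have "\<dots> = up_walks (n - k) (corner_shape k)"
    using up_walks_eq_sum_walks_between[OF corner_shape(1)] corner_shape(2) assms by simp
  finally show ?thesis .
qed

lemma up_walks_column: "up_walks N (column p) = count_incr_involutions p N"
proof -
  have "up_walks N (column p) = (\<Sum>j\<le>N + p. marked_involutions N j * down_walks j (column p))"
    by (rule up_walks_eq_sum_down_walks[OF young_diagram_column]) simp
  also have "\<dots> = (\<Sum>j\<le>N + p. if j \<in> {..p} then marked_involutions N j else 0)"
    by (intro sum.cong) (auto simp: down_walks_column)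
  also have "\<dots> = (\<Sum>j\<in>{..N + p} \<inter> {..p}. marked_involutions N j)"
    by (rule sum.inter_restrict[symmetric]) simp
  also have "{..N + p} \<inter> {..p} = {..p}" by auto
  finally show ?thesis unfolding count_incr_involutions_def .
qed

lemma f_count_eq_count_incr_involutions:
  assumes "2 \<le> k" "k \<le> n"
  shows "f_count n k
    = count_incr_involutions (k - 1) (Suc (n - k)) - count_incr_involutions k (n - k)"
proof -
  have "addable (column (k - 1)) = {(k - 1, 0), (0, 1)}" "insert (k - 1, 0) (column (k - 1)) = column k"
    using addable_column[of "k - 1"] insert_column[of "k - 1"] assms(1) by auto
  then have "up_walks (Suc (n - k)) (column (k - 1))
      = up_walks (n - k) (column k) + up_walks (n - k) (corner_shape k)"
    unfolding corner_shape_def using assms(1) by simp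
  then show ?thesis using f_count_eq_up_walks[OF assms] up_walks_column by simp
qed

section \<open>Involutions increasing on an initial segment\<close>

definition involutive_on :: "nat set \<Rightarrow> (nat \<Rightarrow> nat) \<Rightarrow> bool" where
  "involutive_on A w \<longleftrightarrow> (\<forall>x. x \<notin> A \<longrightarrow> w x = x) \<and> (\<forall>x. w (w x) = x)"

definition incr_involutions :: "nat set \<Rightarrow> nat set \<Rightarrow> (nat \<Rightarrow> nat) set" where
  "incr_involutions P R = {w. involutive_on (P \<union> R) w \<and> strict_mono_on P w}"

lemma involutive_on_mem: "involutive_on A w \<Longrightarrow> x \<in> A \<Longrightarrow> w x \<in> A"
  unfolding involutive_on_def by metis

lemma involutive_on_permutes: "involutive_on A w \<Longrightarrow> w permutes A"
  unfolding involutive_on_def permutes_def by metis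

lemma finite_incr_involutions:
  assumes "finite P" "finite R"
  shows "finite (incr_involutions P R)"
proof -
  have "incr_involutions P R \<subseteq> {w. w permutes P \<union> R}"
    using involutive_on_permutes unfolding incr_involutions_def by blast
  then show ?thesis by (rule finite_subset) (simp add: finite_permutations assms)
qed

lemma involutive_on_fun_upd_pair:
  assumes "t \<noteq> v" "t \<in> A" "v \<in> A"
  shows "involutive_on A (w(t := v, v := t)) \<longleftrightarrow> involutive_on (A - {t, v}) (w(t := t, v := v))"
  using assms unfolding involutive_on_def by (auto split: if_splits)

lemma strict_mono_on_fixes:
  assumes "involutive_on A w" "strict_mono_on A w" "x \<in> A"
  shows "w x = x"
proof (rule ccontr)
  assume "w x \<noteq> x"
  then consider "x < w x" | "w x < x" by linarith
  then show False
    using strict_mono_onD[OF assms(2)] involutive_on_mem[OF assms(1,3)] assms(1,3)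
    unfolding involutive_on_def by (cases; metis less_asym)
qed

lemma incr_involutions_empty: "incr_involutions P {} = {id}"
proof -
  have "w = id" if "involutive_on P w" "strict_mono_on P w" for w
  proof
    fix x show "w x = id x"
      using strict_mono_on_fixes[OF that, of x] that(1) unfolding involutive_on_def by (cases "x \<in> P") auto
  qed
  then show ?thesis
    unfolding incr_involutions_def involutive_on_def by (auto simp: strict_mono_on_id)
qed

lemma card_incr_involutions_pair:
  assumes tv: "t \<noteq> v" "t \<in> P \<union> R" "v \<in> P \<union> R" and PR': "P' \<union> R' = (P \<union> R) - {t, v}"
    and mono: "\<And>w. involutive_on (P' \<union> R') w \<Longrightarrow>
      strict_mono_on P (w(t := v, v := t)) \<longleftrightarrow> strict_mono_on P' w"
  shows "card {w \<in> incr_involutions P R. w t = v} = card (incr_involutions P' R')"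
proof -
  let ?pair = "\<lambda>w. w(t := v, v := t)"
  have "{w \<in> incr_involutions P R. w t = v} = ?pair ` incr_involutions P' R'"
  proof (intro equalityI subsetI)
    fix w assume "w \<in> {w \<in> incr_involutions P R. w t = v}"
    then have w: "involutive_on (P \<union> R) w" "strict_mono_on P w" "w t = v"
      unfolding incr_involutions_def by auto
    let ?w' = "w(t := t, v := v)"
    have "w v = t" using w(1,3) unfolding involutive_on_def by metis
    then have eq: "?pair ?w' = w" using w(3) by (auto simp: fun_eq_iff)
    have "involutive_on (P' \<union> R') ?w'"
      using involutive_on_fun_upd_pair[OF tv, of ?w'] w(1) PR' unfolding eq by simp
    moreover have "strict_mono_on P' ?w'" using mono[OF calculation] w(2) unfolding eq by simp
    ultimately have "?w' \<in> incr_involutions P' R'" unfolding incr_involutions_def by simp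
    then show "w \<in> ?pair ` incr_involutions P' R'"
      by (rule image_eqI[where f = ?pair, OF eq[symmetric]])
  next
    fix w assume "w \<in> ?pair ` incr_involutions P' R'"
    then obtain w' where w': "w' \<in> incr_involutions P' R'" "w = ?pair w'" by blast
    moreover have "w' t = t" "w' v = v"
      using w' PR' unfolding incr_involutions_def involutive_on_def by auto
    ultimately show "w \<in> {w \<in> incr_involutions P R. w t = v}"
      using involutive_on_fun_upd_pair[OF tv, of w'] mono PR' tv(1)
      unfolding incr_involutions_def by (auto simp: fun_upd_idem)
  qed
  moreover have "inj_on ?pair (incr_involutions P' R')"
  proof (rule inj_onI)
    fix w w' assume "w \<in> incr_involutions P' R'" "w' \<in> incr_involutions P' R'" "?pair w = ?pair w'"
    moreover have "w t = t" "w v = v" "w' t = t" "w' v = v"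
      using calculation(1,2) PR' unfolding incr_involutions_def involutive_on_def by auto
    ultimately show "w = w'" by (metis fun_upd_triv fun_upd_upd fun_upd_twist tv(1))
  qed
  ultimately show ?thesis by (simp add: card_image)
qed

lemma incr_involutions_fix:
  assumes "t \<in> R" "t \<notin> P"
  shows "{w \<in> incr_involutions P R. w t = t} = incr_involutions P (R - {t})"
  using assms unfolding incr_involutions_def involutive_on_def by auto

lemma card_incr_involutions_pair_above:
  assumes "t \<in> R" "v \<in> R" "t \<noteq> v" "P \<inter> R = {}"
  shows "card {w \<in> incr_involutions P R. w t = v} = card (incr_involutions P (R - {t, v}))"
proof (rule card_incr_involutions_pair)
  fix w
  have "\<forall>x\<in>P. (w(t := v, v := t)) x = w x" using assms by auto
  then show "strict_mono_on P (w(t := v, v := t)) \<longleftrightarrow> strict_mono_on P w"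
    unfolding strict_mono_on_def by auto
qed (use assms in auto)

lemma incr_involutions_to_max:
  assumes "finite P" "v \<in> P" "w \<in> incr_involutions P R" "w t = v" "\<forall>x\<in>P \<union> R. x \<le> t"
  shows "v = Max P"
proof (rule ccontr)
  assume "v \<noteq> Max P"
  then have "v < Max P" using assms(1,2) by (simp add: order.not_eq_order_implies_strict)
  moreover have inv: "involutive_on (P \<union> R) w" and mono: "strict_mono_on P w"
    using assms(3) unfolding incr_involutions_def by auto
  ultimately have "w v < w (Max P)" using assms(1,2) strict_mono_onD by (metis Max_in empty_iff)
  moreover have "w v = t" using inv assms(4) unfolding involutive_on_def by metis
  moreover have "w (Max P) \<le> t"
    using assms(1,2,5) involutive_on_mem[OF inv, of "Max P"] by (metis Max_in UnI1 empty_iff)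
  ultimately show False by simp
qed

lemma card_incr_involutions_pair_below:
  assumes "finite P" "P \<noteq> {}" "t \<in> R" "P \<inter> R = {}" "\<forall>x\<in>P \<union> R. x \<le> t"
  shows "card {w \<in> incr_involutions P R. w t = Max P}
       = card (incr_involutions (P - {Max P}) (R - {t}))"
proof (rule card_incr_involutions_pair)
  let ?s = "Max P"
  have s: "?s \<in> P" "\<forall>x\<in>P. x \<le> ?s" using assms(1,2) by simp_all
  fix w assume inv: "involutive_on (P - {?s} \<union> (R - {t})) w"
  have t: "t \<notin> P" using assms(3,4) by blast
  show "strict_mono_on P (w(t := ?s, ?s := t)) \<longleftrightarrow> strict_mono_on (P - {?s}) w"
  proof
    assume "strict_mono_on P (w(t := ?s, ?s := t))"
    then have "strict_mono_on (P - {?s}) (w(t := ?s, ?s := t))" by (rule monotone_on_subset) blast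
    moreover have "\<forall>x\<in>P - {?s}. (w(t := ?s, ?s := t)) x = w x" using t by auto
    ultimately show "strict_mono_on (P - {?s}) w" unfolding strict_mono_on_def by auto
  next
    assume mono: "strict_mono_on (P - {?s}) w"
    show "strict_mono_on P (w(t := ?s, ?s := t))"
    proof (rule strict_mono_onI)
      fix a b assume ab: "a \<in> P" "b \<in> P" "a < b"
      then have a: "a \<in> P - {?s}" "a \<noteq> t" using s t by auto
      show "(w(t := ?s, ?s := t)) a < (w(t := ?s, ?s := t)) b"
      proof (cases "b = ?s")
        case True
        have "w a \<in> P - {?s} \<union> (R - {t})" using involutive_on_mem[OF inv] a(1) by blast
        then have "w a \<in> P \<union> R" "w a \<noteq> t" using t by auto
        then have "w a < t" using assms(5) le_neq_implies_less by blast
        then show ?thesis using True a by simp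
      next
        case False
        then show ?thesis using a ab t strict_mono_onD[OF mono] by auto
      qed
    qed
  qed
qed (use assms Max_in[OF assms(1,2)] in blast)+

lemma sum_card_incr_involutions_below:
  assumes fin: "finite P" "finite R" and t: "t \<in> R" "P \<inter> R = {}" "\<forall>x\<in>P \<union> R. x \<le> t"
  shows "(\<Sum>v\<in>P. card {w \<in> incr_involutions P R. w t = v})
       = (if P = {} then 0 else card (incr_involutions (P - {Max P}) (R - {t})))"
proof (cases "P = {}")
  case False
  let ?fib = "\<lambda>v. card {w \<in> incr_involutions P R. w t = v}"
  have "?fib v = 0" if "v \<in> P - {Max P}" for v
    using incr_involutions_to_max[OF fin(1) _ _ _ t(3), of v] that finite_incr_involutions[OF fin]
    by (auto simp: card_eq_0_iff)
  then have "(\<Sum>v\<in>P. ?fib v) = ?fib (Max P)"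
    using sum.remove[OF fin(1) Max_in[OF fin(1) False], of ?fib] by (simp add: sum.neutral)
  then show ?thesis using card_incr_involutions_pair_below[OF fin(1) False t] False by simp
qed simp

lemma card_eq_sum_card_fibers:
  assumes "finite A" "finite B" "f ` A \<subseteq> B"
  shows "card A = (\<Sum>b\<in>B. card {a \<in> A. f a = b})"
  using sum.group[OF assms, of "\<lambda>_. 1 :: nat"] by simp

lemma card_incr_involutions:
  assumes "finite P" "finite R" "\<forall>a\<in>P. \<forall>b\<in>R. a < b"
  shows "card (incr_involutions P R) = count_incr_involutions (card P) (card R)"
  using assms
proof (induction "card R" arbitrary: P R rule: less_induct)
  case less
  note fin = less.prems(1,2)
  show ?case
  proof (cases "R = {}")
    case True
    then show ?thesis by (simp add: incr_involutions_empty count_incr_involutions_0)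
  next
    case False
    define t where "t = Max R"
    obtain r where r: "card R = Suc r" using False fin(2) by (cases "card R") auto
    have "t \<in> R" using False fin(2) unfolding t_def by simp
    then have t: "t \<in> R" "t \<notin> P" using less.prems(3) by blast+
    have top: "\<forall>x\<in>P \<union> R. x \<le> t"
      using t(1) fin(2) less.prems(3) unfolding t_def by (auto intro: less_imp_le)
    have disj: "P \<inter> R = {}" using less.prems(3) by blast
    let ?G = "incr_involutions P R" and ?fib = "\<lambda>v. card {w \<in> incr_involutions P R. w t = v}"
    have IH: "card (incr_involutions P' R') = count_incr_involutions (card P') (card R')"
      if "P' \<subseteq> P" "R' \<subseteq> R - {t}" for P' R'
    proof (rule less.hyps)
      show "card R' < card R" using that(2) t(1) fin(2) by (intro psubset_card_mono) auto
      show "finite P'" using finite_subset[OF that(1) fin(1)] .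
      show "finite R'" using finite_subset[of R' R] that(2) fin(2) by blast
      show "\<forall>a\<in>P'. \<forall>b\<in>R'. a < b" using that less.prems(3) by blast
    qed
    have "(\<lambda>w. w t) ` ?G \<subseteq> P \<union> R"
      using involutive_on_mem t(1) unfolding incr_involutions_def by blast
    then have "card ?G = (\<Sum>v\<in>P \<union> R. ?fib v)"
      using fin finite_incr_involutions by (intro card_eq_sum_card_fibers) auto
    also have "\<dots> = (\<Sum>v\<in>P. ?fib v) + ?fib t + (\<Sum>v\<in>R - {t}. ?fib v)"
      using fin disj t(1) by (simp add: sum.union_disjoint sum.remove)
    also have "?fib t = count_incr_involutions (card P) r"
      using incr_involutions_fix[OF t] IH[of P "R - {t}"] r t(1) by simp
    also have "(\<Sum>v\<in>R - {t}. ?fib v) = r * count_incr_involutions (card P) (r - 1)"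
    proof -
      have "?fib v = count_incr_involutions (card P) (r - 1)" if "v \<in> R - {t}" for v
        using card_incr_involutions_pair_above[OF t(1) _ _ disj, of v] IH[of P "R - {t, v}"]
          that t(1) r fin(2) by (auto simp: card_Diff_subset)
      then show ?thesis using r t(1) fin(2) by simp
    qed
    also have "(\<Sum>v\<in>P. ?fib v) = (if card P = 0 then 0 else count_incr_involutions (card P - 1) r)"
      using sum_card_incr_involutions_below[OF fin t(1) disj top] IH[of "P - {Max P}" "R - {t}"]
        fin(1) r t(1) by (auto simp: card_eq_0_iff)
    finally show ?thesis using r count_incr_involutions_Suc by simp
  qed
qed

lemma strict_mono_on_atLeastAtMost_Suc:
  fixes f :: "nat \<Rightarrow> 'a :: order"
  assumes "a \<le> m"
  shows "strict_mono_on {a..Suc m} f \<longleftrightarrow> strict_mono_on {a..m} f \<and> f m < f (Suc m)"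
proof
  assume mono: "strict_mono_on {a..Suc m} f"
  then have "strict_mono_on {a..m} f" by (rule monotone_on_subset) auto
  moreover have "f m < f (Suc m)" using strict_mono_onD[OF mono] assms by simp
  ultimately show "strict_mono_on {a..m} f \<and> f m < f (Suc m)" ..
next
  assume *: "strict_mono_on {a..m} f \<and> f m < f (Suc m)"
  show "strict_mono_on {a..Suc m} f"
  proof (rule strict_mono_onI)
    fix x y assume xy: "x \<in> {a..Suc m}" "y \<in> {a..Suc m}" "x < y"
    show "f x < f y"
    proof (cases "y = Suc m")
      case True
      then have "f x \<le> f m"
        using * xy strict_mono_onD[of "{a..m}" f x m] by (cases "x = m") (auto intro: less_imp_le)
      then show ?thesis using * True by (auto intro: le_less_trans)
    next
      case False
      then show ?thesis using * xy strict_mono_onD[of "{a..m}" f x y] by auto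
    qed
  qed
qed

lemma involution_on_iff: "involution_on n w \<longleftrightarrow> involutive_on {1..n} w"
proof
  assume "involution_on n w"
  then show "involutive_on {1..n} w"
    unfolding involution_on_def involutive_on_def by (metis comp_apply id_apply permutes_not_in)
next
  assume "involutive_on {1..n} w"
  then show "involution_on n w"
    using involutive_on_permutes unfolding involution_on_def involutive_on_def by (auto simp: fun_eq_iff)
qed

lemma F_set_eq_Diff:
  assumes "1 \<le> m" "m < n"
  shows "F_set n m = incr_involutions {1..m} {m + 1..n} - incr_involutions {1..Suc m} {m + 2..n}"
proof (rule set_eqI)
  fix w
  have U: "{1..m} \<union> {m + 1..n} = {1..n}" "{1..Suc m} \<union> {m + 2..n} = {1..n}" using assms by auto
  show "w \<in> F_set n m \<longleftrightarrow> w \<in> incr_involutions {1..m} {m + 1..n} - incr_involutions {1..Suc m} {m + 2..n}"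
  proof (cases "involutive_on {1..n} w")
    case True
    then have "\<forall>x. w (w x) = x" unfolding involutive_on_def by blast
    then have "w \<circ> w = id" by (simp add: fun_eq_iff)
    then have "inv w = w" using inv_unique_comp by blast
    moreover have "w m \<noteq> w (Suc m)" using True unfolding involutive_on_def by (metis n_not_Suc_n)
    moreover have "(\<forall>a b. 1 \<le> a \<and> a < b \<and> b \<le> m \<longrightarrow> w a < w b) \<longleftrightarrow> strict_mono_on {1..m} w"
      unfolding strict_mono_on_def by auto
    ultimately show ?thesis
      using True strict_mono_on_atLeastAtMost_Suc[OF assms(1), of w]
      unfolding F_set_def incr_involutions_def U involution_on_iff by auto
  qed (unfold F_set_def incr_involutions_def U involution_on_iff, simp)
qed

lemma card_F_set:
  assumes "1 \<le> m" "m < n"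
  shows "card (F_set n m) = count_incr_involutions m (n - m) - count_incr_involutions (Suc m) (n - Suc m)"
proof -
  have "incr_involutions {1..Suc m} {m + 2..n} \<subseteq> incr_involutions {1..m} {m + 1..n}"
  proof -
    have "{1..m} \<union> {m + 1..n} = {1..Suc m} \<union> {m + 2..n}" using assms by auto
    then show ?thesis
      unfolding incr_involutions_def by (auto elim: monotone_on_subset)
  qed
  then show ?thesis
    unfolding F_set_eq_Diff[OF assms]
    by (simp add: card_Diff_subset finite_incr_involutions card_incr_involutions)
qed

theorem lemma2:
  fixes n k :: nat
  assumes "2 \<le> k" and "k \<le> n"
  shows "f_count n k = card (F_set n (k - 1))"
proof -
  have "n - (k - 1) = Suc (n - k)" "Suc (k - 1) = k" using assms by auto
  then show ?thesis
    using f_count_eq_count_incr_involutions[OF assms] card_F_set[of "k - 1" n] assms by simp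
qed

end
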